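(* Let $G$ be a graph with $n$ vertices and vertex degree sequence $d_1(G)\geq d_2(G)\geq \cdots \geq d_n(G)$, let $\mathcal{D}(G)$ be its double graph, and let $0\leq \alpha \leq 1$. Then $$S_{k}(A_{\alpha}(\mathcal{D}(G)))\leq \begin{cases} 4\sum_{i=1}^{k/2}d_i(G)+2(1-\alpha)S_k(A(G)), & \text{if } 1 < k< n \text{ is even};\\ 4\sum_{i=1}^{(k-1)/2}d_i(G)+2d_{(k+1)/2}(G)+2(1-\alpha)S_k(A(G)), & \text{if } 1 \leq k< n \text{ is odd};\\ 4\sum_{i=1}^{k/2}d_i(G), & \text{if } n \leq k\leq 2n \text{ is even};\\ 4\sum_{i=1}^{(k-1)/2}d_i(G)+2d_{(k+1)/2}(G), & \text{if } n \leq k\leq 2n \text{ is odd}. \end{cases}$$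
   Context: All graphs are simple and undirected. $A(G)$ is the adjacency matrix, $D(G)$ the diagonal degree matrix, and $A_{\alpha}(G)=\alpha D(G)+(1-\alpha)A(G)$. For a real symmetric matrix $M$ with eigenvalues $\lambda_1(M)\geq\cdots\geq\lambda_N(M)$, $S_k(M)=\sum_{i=1}^k\lambda_i(M)$. The double graph $\mathcal{D}(G)$ is obtained by taking two copies of $G$ and joining each vertex in one copy with the neighbors of the corresponding vertex in the other copy (so $A(\mathcal{D}(G))=\begin{pmatrix}1&1\\1&1\end{pmatrix}\otimes A(G)$). *)

theory Defs
  imports "Jordan_Normal_Form.Char_Poly"
begin

definition simple_graph :: "nat \<Rightarrow> (nat \<Rightarrow> nat \<Rightarrow> bool) \<Rightarrow> bool" where
  "simple_graph n E \<longleftrightarrow> (\<forall>i<n. \<forall>j<n. E i j = E j i) \<and> (\<forall>i<n. \<not> E i i)"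

definition degree :: "nat \<Rightarrow> (nat \<Rightarrow> nat \<Rightarrow> bool) \<Rightarrow> nat \<Rightarrow> nat" where
  "degree n E v = card {u \<in> {0..<n}. E v u}"

(* degree sequence sorted non-increasingly; d_i(G) = degseq n E ! (i - 1) *)
definition degseq :: "nat \<Rightarrow> (nat \<Rightarrow> nat \<Rightarrow> bool) \<Rightarrow> nat list" where
  "degseq n E = rev (sort (map (degree n E) [0..<n]))"

definition dg :: "nat \<Rightarrow> (nat \<Rightarrow> nat \<Rightarrow> bool) \<Rightarrow> nat \<Rightarrow> real" where
  "dg n E i = real (degseq n E ! (i - 1))"

definition adj_mat :: "nat \<Rightarrow> (nat \<Rightarrow> nat \<Rightarrow> bool) \<Rightarrow> real mat" where
  "adj_mat n E = mat n n (\<lambda>(i, j). if E i j then 1 else 0)"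

definition deg_mat :: "nat \<Rightarrow> (nat \<Rightarrow> nat \<Rightarrow> bool) \<Rightarrow> real mat" where
  "deg_mat n E = mat n n (\<lambda>(i, j). if i = j then real (degree n E i) else 0)"

definition A_alpha :: "real \<Rightarrow> nat \<Rightarrow> (nat \<Rightarrow> nat \<Rightarrow> bool) \<Rightarrow> real mat" where
  "A_alpha \<alpha> n E = \<alpha> \<cdot>\<^sub>m deg_mat n E + (1 - \<alpha>) \<cdot>\<^sub>m adj_mat n E"

(* Double graph of (n, E): vertices {0..<2n}; vertex i is a copy of i mod n;
   i ~ j iff (i mod n) ~ (j mod n) in G, so A(D(G)) = [[1,1],[1,1]] \<otimes> A(G). *)
definition double_edges :: "nat \<Rightarrow> (nat \<Rightarrow> nat \<Rightarrow> bool) \<Rightarrow> nat \<Rightarrow> nat \<Rightarrow> bool" where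
  "double_edges n E i j = E (i mod n) (j mod n)"

(* eigenvalues of a real square matrix whose characteristic polynomial splits over the reals
   (true for real symmetric matrices), listed with multiplicity in non-increasing order *)
definition eigvals :: "real mat \<Rightarrow> real list" where
  "eigvals M = (THE xs. sorted (rev xs) \<and>
       char_poly M = (\<Prod>a\<leftarrow>xs. [:- a, 1:]))"

definition S :: "nat \<Rightarrow> real mat \<Rightarrow> real" where
  "S k M = (\<Sum>i<k. eigvals M ! i)"

end

theory Submission
  imports Defs
begin

text \<open>
  Let \<open>u\<^sub>1, ..., u\<^sub>k\<close> be orthonormal eigenvectors of \<open>M = A\<^sub>\<alpha>(D(G))\<close> for its \<open>k\<close>
  largest eigenvalues, so that \<open>S\<^sub>k(M)\<close> is the sum of the Rayleigh quotients \<open>u\<^sub>i\<^sup>T M u\<^sub>i\<close>.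
  Splitting a vector of length \<open>2n\<close> into halves \<open>(x, z)\<close>, such a quotient equals
  \<open>2\<alpha> \<Sum>\<^sub>v d\<^sub>v (x\<^sub>v\<^sup>2 + z\<^sub>v\<^sup>2) + (1 - \<alpha>) y\<^sup>T A(G) y\<close> with \<open>y = x + z\<close>.
  In the degree part every degree carries a weight in \<open>[0, 1]\<close> and the weights add up to \<open>k\<close>,
  so for every threshold \<open>t \<ge> 0\<close> it is at most \<open>2 (t k + 2 \<Sum>\<^sub>v max (d\<^sub>v - t) 0)\<close>; the choice
  \<open>t = d\<^sub>r\<close> with \<open>r = (k + 1) div 2\<close> turns this into the degree terms of the bound.
  For the adjacency part, expand the \<open>y\<^sub>i\<close> in an orthonormal eigenbasis \<open>v\<^sub>j\<close> of \<open>A(G)\<close>: the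
  weights \<open>W\<^sub>j = \<Sum>\<^sub>i (v\<^sub>j \<bullet> y\<^sub>i)\<^sup>2\<close> lie in \<open>[0, 2]\<close> and add up to at most \<open>2k\<close>, and
  \<open>\<bar>\<lambda>\<^sub>j\<bar> \<le> v\<^sub>j\<^sup>T D v\<^sub>j\<close> because \<open>D + A\<close> and \<open>D - A\<close> are positive semidefinite. This bounds
  the adjacency part by twice \<open>S\<^sub>k(A(G))\<close> (present only for \<open>k < n\<close>) plus the same degree
  budget, and the combination with weights \<open>\<alpha>\<close> and \<open>1 - \<alpha>\<close> gives the theorem.
  The underlying spectral theorem for real symmetric matrices follows by Householder deflation.
\<close>

section \<open>Spectral decomposition of real symmetric matrices\<close>

lemma symmetric_real_mat_complex_eigenvalue_real:
  fixes A :: "real mat"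
  assumes A: "A \<in> carrier_mat n n" and sym: "A\<^sup>T = A"
    and ev: "eigenvalue (map_mat complex_of_real A) a"
  shows "a \<in> \<real>"
proof -
  let ?C = "map_mat complex_of_real A"
  have C: "?C \<in> carrier_mat n n" and C_sym: "?C\<^sup>T = ?C"
    using A sym by (auto simp: map_mat_transpose)
  obtain v where v: "v \<in> carrier_vec n" "v \<noteq> 0\<^sub>v n" and Cv: "?C *\<^sub>v v = a \<cdot>\<^sub>v v"
    using ev C unfolding eigenvalue_def eigenvector_def by auto
  have conj_Cv: "conjugate (?C *\<^sub>v v) = ?C *\<^sub>v conjugate v"
    using A v by (intro eq_vecI) (auto simp: conjugate_sprod_vec scalar_prod_def sum_conjugate)
  have "a * (v \<bullet>c v) = (?C *\<^sub>v v) \<bullet>c v"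
    using v by (simp add: Cv)
  also have "\<dots> = (?C\<^sup>T *\<^sub>v v) \<bullet> conjugate v"
    using C_sym by simp
  also have "\<dots> = v \<bullet> (?C *\<^sub>v conjugate v)"
    using C v by (intro transpose_vec_mult_scalar) auto
  also have "\<dots> = cnj a * (v \<bullet>c v)"
    using v by (simp flip: conj_Cv add: Cv conjugate_smult_vec)
  finally have "a = cnj a"
    using v by simp
  then show ?thesis
    by (simp add: Reals_cnj_iff)
qed

lemma symmetric_real_mat_char_poly_root:
  fixes A :: "real mat"
  assumes A: "A \<in> carrier_mat n n" and sym: "A\<^sup>T = A" and n: "0 < n"
  shows "\<exists>r. poly (char_poly A) r = 0"
proof -
  let ?C = "map_mat complex_of_real A"
  have C: "?C \<in> carrier_mat n n" using A by simp
  obtain as where as: "char_poly ?C = (\<Prod>a\<leftarrow>as. [:- a, 1:])" "length as = n"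
    using char_poly_factorized[OF C] by auto
  then obtain a where "a \<in> set as" using n by (cases as) auto
  then have "poly (char_poly ?C) a = 0"
    by (simp add: as(1) poly_prod_list_zero_iff)
  then have "a \<in> \<real>"
    using C by (intro symmetric_real_mat_complex_eigenvalue_real[OF A sym])
      (simp add: eigenvalue_root_char_poly)
  then obtain r where "a = complex_of_real r" by (auto elim: Reals_cases)
  with \<open>poly (char_poly ?C) a = 0\<close> have "poly (char_poly A) r = 0"
    by (simp add: of_real_hom.char_poly_hom[OF A])
  then show ?thesis ..
qed

lemma symmetric_real_mat_max_eigenvector:
  fixes A :: "real mat"
  assumes A: "A \<in> carrier_mat n n" and sym: "A\<^sup>T = A" and n: "0 < n"
  obtains e v where "v \<in> carrier_vec n" "v \<bullet> v = 1" "A *\<^sub>v v = e \<cdot>\<^sub>v v"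
    and "\<And>r. poly (char_poly A) r = 0 \<Longrightarrow> r \<le> e"
proof -
  define R where "R = {r. poly (char_poly A) r = 0}"
  have "char_poly A \<noteq> 0"
    using degree_monic_char_poly[OF A] by auto
  then have "finite R"
    unfolding R_def by (rule poly_roots_finite)
  moreover have "R \<noteq> {}"
    using symmetric_real_mat_char_poly_root[OF A sym n] unfolding R_def by auto
  ultimately have max_root: "Max R \<in> R" "\<And>r. r \<in> R \<Longrightarrow> r \<le> Max R"
    by auto
  then have "eigenvalue A (Max R)"
    using A unfolding R_def by (simp add: eigenvalue_root_char_poly)
  then obtain x where x: "x \<in> carrier_vec n" "x \<noteq> 0\<^sub>v n" "A *\<^sub>v x = Max R \<cdot>\<^sub>v x"
    using A unfolding eigenvalue_def eigenvector_def by auto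
  have "x \<bullet> x > 0"
    using conjugate_square_greater_0_vec[OF x(1)] x(2) by simp
  define v where "v = (1 / sqrt (x \<bullet> x)) \<cdot>\<^sub>v x"
  have "v \<in> carrier_vec n" "v \<bullet> v = 1" "A *\<^sub>v v = Max R \<cdot>\<^sub>v v"
    using x A \<open>x \<bullet> x > 0\<close>
    by (auto simp: v_def mult_mat_vec smult_smult_assoc power2_eq_square[symmetric])
  then show ?thesis
    using that max_root(2) unfolding R_def by blast
qed

text \<open>For \<open>w = 0\<close> the division by zero makes this the identity matrix.\<close>

definition householder_mat :: "nat \<Rightarrow> (nat \<Rightarrow> real) \<Rightarrow> real mat" where
  "householder_mat n w =
     mat n n (\<lambda>(i, j). (if i = j then 1 else 0) - 2 / (\<Sum>k<n. w k * w k) * (w i * w j))"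

lemma householder_mat_carrier: "householder_mat n w \<in> carrier_mat n n"
  by (simp add: householder_mat_def)

lemma householder_mat_symmetric: "(householder_mat n w)\<^sup>T = householder_mat n w"
  by (rule eq_matI) (auto simp: householder_mat_def mult.commute)

lemma householder_mat_involution: "householder_mat n w * householder_mat n w = 1\<^sub>m n"
proof (rule eq_matI)
  fix i j assume ij: "i < dim_row (1\<^sub>m n)" "j < dim_col (1\<^sub>m n)"
  let ?H = "householder_mat n w"
  define s where "s = (\<Sum>k<n. w k * w k)"
  define c where "c = 2 / s"
  have H_pq: "?H $$ (p, q) = (if p = q then 1 else 0) - c * (w p * w q)" if "p < n" "q < n" for p q
    using that by (simp add: householder_mat_def c_def s_def)
  have "(?H * ?H) $$ (i, j) = (\<Sum>k<n. ?H $$ (i, k) * ?H $$ (k, j))"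
    using ij householder_mat_carrier[of n w] by (simp add: scalar_prod_def lessThan_atLeast0)
  also have "\<dots> = (\<Sum>k<n. (if i = k then ?H $$ (k, j) else 0) - c * w i * (w k * ?H $$ (k, j)))"
    using ij by (intro sum.cong) (auto simp: H_pq algebra_simps)
  also have "\<dots> = ?H $$ (i, j) - c * w i * (\<Sum>k<n. w k * ?H $$ (k, j))"
    using ij by (simp add: sum_subtractf sum_distrib_left)
  also have "(\<Sum>k<n. w k * ?H $$ (k, j)) = (\<Sum>k<n. (if k = j then w j else 0) - c * w j * (w k * w k))"
    using ij by (intro sum.cong) (auto simp: H_pq algebra_simps)
  also have "\<dots> = w j * (1 - c * s)"
    using ij by (simp add: s_def sum_subtractf sum_distrib_left algebra_simps)
  finally have "(?H * ?H) $$ (i, j) = 1\<^sub>m n $$ (i, j) + w i * w j * (c * (c * s - 2))"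
    using ij by (simp add: H_pq algebra_simps)
  moreover have "c * (c * s - 2) = 0"
    by (cases "s = 0") (simp_all add: c_def)
  ultimately show "(?H * ?H) $$ (i, j) = 1\<^sub>m n $$ (i, j)"
    by simp
qed (simp_all add: householder_mat_def)

lemma householder_mat_unit_vec:
  fixes v :: "real vec"
  assumes v: "v \<in> carrier_vec n" and unit: "v \<bullet> v = 1" and n: "0 < n"
  defines "w \<equiv> \<lambda>k. v $ k - (if k = 0 then 1 else 0)"
  shows "householder_mat n w *\<^sub>v unit_vec n 0 = v"
proof (rule eq_vecI)
  fix i assume "i < dim_vec v"
  then have i: "i < n" using v by simp
  define s where "s = (\<Sum>k<n. w k * w k)"
  define c where "c = 2 / s"
  have s_w0: "s = - 2 * w 0"
  proof -
    have "s = (\<Sum>k<n. v $ k * v $ k - 2 * (if k = 0 then v $ k else 0) + (if k = 0 then 1 else 0))"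
      unfolding s_def by (intro sum.cong) (auto simp: w_def algebra_simps)
    also have "\<dots> = (\<Sum>k<n. v $ k * v $ k) - 2 * v $ 0 + 1"
      using n by (simp add: sum.distrib sum_subtractf flip: sum_distrib_left)
    also have "(\<Sum>k<n. v $ k * v $ k) = 1"
      using unit v by (simp add: scalar_prod_def lessThan_atLeast0)
    finally show ?thesis by (simp add: w_def)
  qed
  have Hi: "(householder_mat n w *\<^sub>v unit_vec n 0) $ i = (if i = 0 then 1 else 0) - w i * (c * w 0)"
    using i n by (simp add: householder_mat_def c_def s_def ac_simps)
  have "c * w 0 = -1 \<or> w i = 0"
  proof (cases "s = 0")
    case True
    then have "\<forall>k\<in>{..<n}. w k * w k = 0"
      unfolding s_def by (subst sum_nonneg_eq_0_iff[symmetric]) auto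
    then show ?thesis using i by simp
  next
    case False
    then show ?thesis by (simp add: c_def s_w0)
  qed
  then show "(householder_mat n w *\<^sub>v unit_vec n 0) $ i = v $ i"
    unfolding Hi by (auto simp: w_def)
qed (use v in \<open>simp add: householder_mat_def\<close>)

lemma orthogonal_mat_right_inverse:
  fixes P :: "real mat"
  assumes "P \<in> carrier_mat n n" "P\<^sup>T * P = 1\<^sub>m n"
  shows "P * P\<^sup>T = 1\<^sub>m n"
  using assms mat_mult_left_right_inverse[of "P\<^sup>T" n P] by auto

lemma orthogonal_mat_cols:
  fixes P :: "real mat"
  assumes "P \<in> carrier_mat n n" "P\<^sup>T * P = 1\<^sub>m n" "i < n" "j < n"
  shows "(\<Sum>p<n. P $$ (p, i) * P $$ (p, j)) = (if i = j then 1 else 0)"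
proof -
  have "(\<Sum>p<n. P $$ (p, i) * P $$ (p, j)) = (P\<^sup>T * P) $$ (i, j)"
    using assms(1,3,4) by (simp add: scalar_prod_def lessThan_atLeast0)
  then show ?thesis
    using assms by simp
qed

lemma orthogonal_mat_rows:
  fixes P :: "real mat"
  assumes P: "P \<in> carrier_mat n n" "P\<^sup>T * P = 1\<^sub>m n" and "p < n" "q < n"
  shows "(\<Sum>j<n. P $$ (p, j) * P $$ (q, j)) = (if p = q then 1 else 0)"
proof -
  have "(\<Sum>j<n. P $$ (p, j) * P $$ (q, j)) = (P * P\<^sup>T) $$ (p, q)"
    using assms(1,3,4) by (simp add: scalar_prod_def lessThan_atLeast0)
  then show ?thesis
    using assms orthogonal_mat_right_inverse[OF P] by simp
qed

lemma orthogonal_mat_parseval: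
  fixes P :: "real mat"
  assumes "P \<in> carrier_mat n n" "P\<^sup>T * P = 1\<^sub>m n"
  shows "(\<Sum>j<n. (\<Sum>p<n. P $$ (p, j) * x p)\<^sup>2) = (\<Sum>p<n. (x p)\<^sup>2)"
proof -
  have "(\<Sum>j<n. (\<Sum>p<n. P $$ (p, j) * x p)\<^sup>2)
      = (\<Sum>j<n. \<Sum>p<n. \<Sum>q<n. x p * x q * (P $$ (p, j) * P $$ (q, j)))"
    by (simp add: power2_eq_square sum_product ac_simps)
  also have "\<dots> = (\<Sum>p<n. \<Sum>j<n. \<Sum>q<n. x p * x q * (P $$ (p, j) * P $$ (q, j)))"
    by (rule sum.swap)
  also have "\<dots> = (\<Sum>p<n. \<Sum>q<n. \<Sum>j<n. x p * x q * (P $$ (p, j) * P $$ (q, j)))"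
    by (rule sum.cong[OF refl], rule sum.swap)
  also have "\<dots> = (\<Sum>p<n. \<Sum>q<n. x p * x q * (\<Sum>j<n. P $$ (p, j) * P $$ (q, j)))"
    by (simp add: sum_distrib_left)
  also have "\<dots> = (\<Sum>p<n. \<Sum>q<n. x p * x q * (if p = q then 1 else 0))"
    using orthogonal_mat_rows[OF assms] by simp
  also have "\<dots> = (\<Sum>p<n. (x p)\<^sup>2)"
    by (simp add: power2_eq_square if_distrib[of "\<lambda>y. _ * y"] cong: if_cong)
  finally show ?thesis .
qed

definition spectral_decomp :: "nat \<Rightarrow> real mat \<Rightarrow> real mat \<Rightarrow> (nat \<Rightarrow> real) \<Rightarrow> bool" where
  "spectral_decomp n A P l \<longleftrightarrow>
     P \<in> carrier_mat n n \<and> P\<^sup>T * P = 1\<^sub>m n \<and> A = P * mat_diag n l * P\<^sup>T \<and> antimono_on {..<n} l"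

lemma char_poly_spectral_decomp:
  assumes dec: "spectral_decomp n A P l"
  shows "char_poly A = (\<Prod>a\<leftarrow>map l [0..<n]. [:- a, 1:])"
proof -
  have P: "P \<in> carrier_mat n n" "P\<^sup>T * P = 1\<^sub>m n" and A: "A = P * mat_diag n l * P\<^sup>T"
    using dec unfolding spectral_decomp_def by auto
  have "similar_mat A (mat_diag n l)"
    unfolding similar_mat_def similar_mat_wit_def
    using orthogonal_mat_right_inverse[OF P] P A
    by (intro exI[of _ P] exI[of _ "P\<^sup>T"]) (auto simp: Let_def)
  then have "char_poly A = char_poly (mat_diag n l)"
    by (rule char_poly_similar)
  also have "\<dots> = (\<Prod>a\<leftarrow>diag_mat (mat_diag n l). [:- a, 1:])"
    by (rule char_poly_upper_triangular) (auto simp: upper_triangular_def mat_diag_def)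
  also have "diag_mat (mat_diag n l) = map l [0..<n]"
    by (simp add: diag_mat_def mat_diag_def)
  finally show ?thesis .
qed

lemma spectral_decomp_orthogonal_conj:
  assumes dec: "spectral_decomp n B Q l"
    and H: "H \<in> carrier_mat n n" "H\<^sup>T * H = 1\<^sub>m n" and A: "A = H * B * H\<^sup>T"
  shows "spectral_decomp n A (H * Q) l"
proof -
  have Q: "Q \<in> carrier_mat n n" "Q\<^sup>T * Q = 1\<^sub>m n" and B: "B = Q * mat_diag n l * Q\<^sup>T"
    using dec unfolding spectral_decomp_def by auto
  have HHQ: "H\<^sup>T * (H * Q) = Q"
    using H Q by (metis assoc_mult_mat left_mult_one_mat transpose_carrier_mat)
  have "(H * Q)\<^sup>T * (H * Q) = Q\<^sup>T * H\<^sup>T * (H * Q)"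
    using H Q by (simp add: transpose_mult)
  also have "\<dots> = Q\<^sup>T * (H\<^sup>T * (H * Q))"
    using H Q by (intro assoc_mult_mat) auto
  finally have "(H * Q)\<^sup>T * (H * Q) = 1\<^sub>m n"
    using Q by (simp add: HHQ)
  moreover have "A = (H * Q) * mat_diag n l * (H * Q)\<^sup>T"
    using H Q unfolding A B
    by (simp add: transpose_mult assoc_mult_mat[of _ n n _ n _ n] mult_carrier_mat[of _ n n _ n])
  ultimately show ?thesis
    using dec H Q unfolding spectral_decomp_def by auto
qed

lemma spectral_decomp_four_block:
  assumes dec: "spectral_decomp K B P l" and e: "\<And>j. j < K \<Longrightarrow> l j \<le> e"
  shows "spectral_decomp (Suc K)
    (four_block_mat (mat 1 1 (\<lambda>_. e)) (0\<^sub>m 1 K) (0\<^sub>m K 1) B)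
    (four_block_mat (1\<^sub>m 1) (0\<^sub>m 1 K) (0\<^sub>m K 1) P)
    (\<lambda>j. if j = 0 then e else l (j - 1))"
proof -
  have P: "P \<in> carrier_mat K K" "P\<^sup>T * P = 1\<^sub>m K" and B: "B = P * mat_diag K l * P\<^sup>T"
    and l: "antimono_on {..<K} l"
    using dec unfolding spectral_decomp_def by auto
  have B_carrier: "B \<in> carrier_mat K K"
    using P unfolding B by auto
  have diag_dims: "dim_row (mat_diag K l) = K" "dim_col (mat_diag K l) = K"
    by (simp_all add: mat_diag_def)
  let ?l = "\<lambda>j. if j = 0 then e else l (j - 1)"
  let ?Q = "four_block_mat (1\<^sub>m 1) (0\<^sub>m 1 K) (0\<^sub>m K 1) P"
  note mult_blocks = mult_four_block_mat[where ?nr1.0 = 1 and ?n1.0 = 1 and ?nc1.0 = 1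
      and ?nr2.0 = K and ?n2.0 = K and ?nc2.0 = K]
  have Q: "?Q \<in> carrier_mat (Suc K) (Suc K)"
    using P by auto
  have QT: "?Q\<^sup>T = four_block_mat (1\<^sub>m 1) (0\<^sub>m 1 K) (0\<^sub>m K 1) P\<^sup>T"
    using P by (intro eq_matI) auto
  have diag: "mat_diag (Suc K) ?l
      = four_block_mat (mat 1 1 (\<lambda>_. e)) (0\<^sub>m 1 K) (0\<^sub>m K 1) (mat_diag K l)"
    by (rule eq_matI) (auto simp: mat_diag_def)
  have "?Q\<^sup>T * ?Q = 1\<^sub>m (Suc K)"
    using P unfolding QT by (simp add: mult_blocks)
  moreover have "four_block_mat (mat 1 1 (\<lambda>_. e)) (0\<^sub>m 1 K) (0\<^sub>m K 1) B
      = ?Q * mat_diag (Suc K) ?l * ?Q\<^sup>T"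
    using P B_carrier diag_dims unfolding QT diag by (simp add: B[symmetric] mult_blocks)
  moreover have "antimono_on {..<Suc K} ?l"
    using l e by (auto simp: monotone_on_def)
  ultimately show ?thesis
    using Q unfolding spectral_decomp_def by blast
qed

lemma symmetric_mat_entry_swap:
  assumes "C \<in> carrier_mat n n" "C\<^sup>T = C" "i < n" "j < n"
  shows "C $$ (i, j) = C $$ (j, i)"
  using assms by (metis index_transpose_mat(1) carrier_matD)

lemma symmetric_mat_eigenvector_block:
  fixes C :: "real mat"
  assumes C: "C \<in> carrier_mat (Suc K) (Suc K)" "C\<^sup>T = C"
    and e: "C *\<^sub>v unit_vec (Suc K) 0 = e \<cdot>\<^sub>v unit_vec (Suc K) 0"
  shows "C = four_block_mat (mat 1 1 (\<lambda>_. e)) (0\<^sub>m 1 K) (0\<^sub>m K 1)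
    (mat K K (\<lambda>(i, j). C $$ (Suc i, Suc j)))" (is "C = ?blk")
proof (rule eq_matI)
  fix i j assume ij: "i < dim_row ?blk" "j < dim_col ?blk"
  have C_col: "C $$ (p, 0) = (if p = 0 then e else 0)" if "p < Suc K" for p
    using that e C(1) by (auto dest!: arg_cong[where f = "\<lambda>x. x $ p"])
  have "C $$ (0, j) = C $$ (j, 0)"
    using ij C by (intro symmetric_mat_entry_swap) auto
  then show "C $$ (i, j) = ?blk $$ (i, j)"
    using ij C_col by (cases i; cases j) auto
qed (use C in auto)

lemma symmetric_mat_deflation:
  fixes A :: "real mat"
  assumes A: "A \<in> carrier_mat (Suc K) (Suc K)" "A\<^sup>T = A"
    and v: "v \<in> carrier_vec (Suc K)" "v \<bullet> v = 1" "A *\<^sub>v v = e \<cdot>\<^sub>v v"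
  obtains H B where "H \<in> carrier_mat (Suc K) (Suc K)" "H\<^sup>T = H" "H * H = 1\<^sub>m (Suc K)"
    "B \<in> carrier_mat K K" "B\<^sup>T = B"
    "A = H * four_block_mat (mat 1 1 (\<lambda>_. e)) (0\<^sub>m 1 K) (0\<^sub>m K 1) B * H"
proof -
  let ?N = "Suc K"
  define H where "H = householder_mat ?N (\<lambda>k. v $ k - (if k = 0 then 1 else 0))"
  have H: "H \<in> carrier_mat ?N ?N" "H\<^sup>T = H" "H * H = 1\<^sub>m ?N"
    unfolding H_def by (simp_all only: householder_mat_carrier householder_mat_symmetric
        householder_mat_involution)
  have He: "H *\<^sub>v unit_vec ?N 0 = v"
    unfolding H_def using v by (intro householder_mat_unit_vec) auto
  have Hv: "H *\<^sub>v v = unit_vec ?N 0"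
    using H by (simp flip: He add: assoc_mult_mat_vec[symmetric, of _ ?N ?N])
  define C where "C = H * A * H"
  have C: "C \<in> carrier_mat ?N ?N"
    using H A by (simp add: C_def)
  have C_sym: "C\<^sup>T = C"
    using H A
    by (simp add: C_def transpose_mult[of _ ?N ?N _ ?N] assoc_mult_mat[of _ ?N ?N _ ?N _ ?N]
        mult_carrier_mat[of _ ?N ?N _ ?N])
  have C_e: "C *\<^sub>v unit_vec ?N 0 = e \<cdot>\<^sub>v unit_vec ?N 0"
    using H A v
    by (simp add: C_def assoc_mult_mat_vec[of _ ?N ?N _ ?N] mult_carrier_mat[of _ ?N ?N _ ?N]
        He Hv mult_mat_vec)
  define B where "B = mat K K (\<lambda>(i, j). C $$ (Suc i, Suc j))"
  have B: "B \<in> carrier_mat K K"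
    by (simp add: B_def)
  have B_sym: "B\<^sup>T = B"
    by (intro eq_matI) (auto simp: B_def symmetric_mat_entry_swap[OF C C_sym])
  have C_block: "C = four_block_mat (mat 1 1 (\<lambda>_. e)) (0\<^sub>m 1 K) (0\<^sub>m K 1) B"
    unfolding B_def by (rule symmetric_mat_eigenvector_block[OF C C_sym C_e])
  have "H * C * H = (H * H) * A * (H * H)"
    using H(1) A(1)
    by (simp add: C_def assoc_mult_mat[of _ ?N ?N _ ?N _ ?N] mult_carrier_mat[of _ ?N ?N _ ?N])
  then have "A = H * C * H"
    using H A by simp
  then show ?thesis
    using that[OF H B B_sym] unfolding C_block by blast
qed

text \<open>Induction on the dimension: split off an eigenvector of the largest eigenvalue \<open>e\<close>; the
  eigenvalues of the remaining block are roots of the same characteristic polynomial, so they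
  do not exceed \<open>e\<close>.\<close>

lemma spectral_decomp_exists:
  fixes A :: "real mat"
  assumes "A \<in> carrier_mat n n" and "A\<^sup>T = A"
  shows "\<exists>P l. spectral_decomp n A P l"
  using assms
proof (induction n arbitrary: A)
  case 0
  then have "spectral_decomp 0 A (1\<^sub>m 0) (\<lambda>_. 0)"
    unfolding spectral_decomp_def by auto
  then show ?case by blast
next
  case (Suc K)
  let ?N = "Suc K"
  note A = Suc.prems
  obtain e v where v: "v \<in> carrier_vec ?N" "v \<bullet> v = 1" "A *\<^sub>v v = e \<cdot>\<^sub>v v"
    and e_max: "\<And>r. poly (char_poly A) r = 0 \<Longrightarrow> r \<le> e"
    using symmetric_real_mat_max_eigenvector[OF A] by blast
  let ?blk = "\<lambda>B. four_block_mat (mat 1 1 (\<lambda>_. e)) (0\<^sub>m 1 K) (0\<^sub>m K 1) B"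
  obtain H B where H: "H \<in> carrier_mat ?N ?N" "H\<^sup>T = H" "H * H = 1\<^sub>m ?N"
    and B: "B \<in> carrier_mat K K" "B\<^sup>T = B" and A_eq: "A = H * ?blk B * H"
    using symmetric_mat_deflation[OF A v] by blast
  obtain P l where dec: "spectral_decomp K B P l"
    using Suc.IH[OF B] by blast
  have "similar_mat A (?blk B)"
    using H A_eq A(1) B(1) unfolding similar_mat_def similar_mat_wit_def
    by (intro exI[of _ H]) (auto simp: Let_def)
  then have "char_poly A = char_poly (?blk B)"
    by (rule char_poly_similar)
  also have "\<dots> = char_poly (mat 1 1 (\<lambda>_. e)) * char_poly B"
    using B by (intro char_poly_four_block_zeros_col) auto
  finally have "poly (char_poly A) (l j) = 0" if "j < K" for j
    using that unfolding char_poly_spectral_decomp[OF dec] by (force simp: poly_prod_list_zero_iff)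
  then have "spectral_decomp ?N (?blk B)
      (four_block_mat (1\<^sub>m 1) (0\<^sub>m 1 K) (0\<^sub>m K 1) P) (\<lambda>j. if j = 0 then e else l (j - 1))"
    by (intro spectral_decomp_four_block[OF dec] e_max)
  then show ?case
    using H A_eq by (metis spectral_decomp_orthogonal_conj)
qed

lemma order_prod_linear_factors:
  "order x (\<Prod>a\<leftarrow>xs. [:- a, 1:]) = count (mset xs) (x :: 'a :: idom)"
proof (induction xs)
  case (Cons a xs)
  have "[:- a, 1:] * (\<Prod>b\<leftarrow>xs. [:- b, 1:]) \<noteq> 0"
    unfolding mult_eq_0_iff by auto
  then have "order x ([:- a, 1:] * (\<Prod>b\<leftarrow>xs. [:- b, 1:]))
      = order x [:- a, 1:] + order x (\<Prod>b\<leftarrow>xs. [:- b, 1:])"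
    by (rule order_mult)
  then show ?case
    using Cons.IH by (simp add: order_linear')
qed (simp add: order_0I)

lemma sorted_linear_factors_unique:
  fixes xs ys :: "'a :: {idom, linorder} list"
  assumes "(\<Prod>a\<leftarrow>xs. [:- a, 1:]) = (\<Prod>a\<leftarrow>ys. [:- a, 1:])"
    and "sorted (rev xs)" and "sorted (rev ys)"
  shows "xs = ys"
proof -
  have "mset xs = mset ys"
    using assms(1) by (metis multiset_eqI order_prod_linear_factors)
  then have "sort (rev ys) = rev xs"
    using assms(2) by (intro properties_for_sort) auto
  then show ?thesis
    using assms(3) by (simp add: sorted_sort_id)
qed

lemma eigvals_spectral_decomp:
  assumes "spectral_decomp n A P l"
  shows "eigvals A = map l [0..<n]"
  unfolding eigvals_def
proof (rule the_equality)
  have "antimono_on {..<n} l"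
    using assms by (simp add: spectral_decomp_def)
  then have "sorted (rev (map l [0..<n]))"
    by (auto simp: sorted_iff_nth_mono rev_nth monotone_on_def)
  then show "sorted (rev (map l [0..<n])) \<and> char_poly A = (\<Prod>a\<leftarrow>map l [0..<n]. [:- a, 1:])"
    using char_poly_spectral_decomp[OF assms] by simp
  then show "xs = map l [0..<n]"
    if "sorted (rev xs) \<and> char_poly A = (\<Prod>a\<leftarrow>xs. [:- a, 1:])" for xs
    using that sorted_linear_factors_unique by metis
qed

lemma S_spectral_decomp:
  assumes "spectral_decomp n A P l" and "k \<le> n"
  shows "S k A = (\<Sum>i<k. l i)"
  using assms by (simp add: S_def eigvals_spectral_decomp)

lemma spectral_decomp_entry:
  assumes "spectral_decomp n A P l" "p < n" "q < n"
  shows "A $$ (p, q) = (\<Sum>j<n. P $$ (p, j) * l j * P $$ (q, j))"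
proof -
  have P: "P \<in> carrier_mat n n" and A: "A = P * mat_diag n l * P\<^sup>T"
    using assms(1) unfolding spectral_decomp_def by auto
  show ?thesis
    using assms(2,3) P unfolding A
    by (simp add: mat_diag_mult_right[OF P] scalar_prod_def lessThan_atLeast0)
qed

lemma spectral_decomp_quadratic_form:
  assumes "spectral_decomp n A P l"
  shows "(\<Sum>p<n. \<Sum>q<n. x p * A $$ (p, q) * x q) = (\<Sum>j<n. l j * (\<Sum>p<n. P $$ (p, j) * x p)\<^sup>2)"
proof -
  have "(\<Sum>p<n. \<Sum>q<n. x p * A $$ (p, q) * x q)
      = (\<Sum>p<n. \<Sum>q<n. \<Sum>j<n. l j * ((P $$ (p, j) * x p) * (P $$ (q, j) * x q)))"
    using spectral_decomp_entry[OF assms]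
    by (intro sum.cong refl) (simp add: sum_distrib_left sum_distrib_right ac_simps)
  also have "\<dots> = (\<Sum>p<n. \<Sum>j<n. \<Sum>q<n. l j * ((P $$ (p, j) * x p) * (P $$ (q, j) * x q)))"
    by (rule sum.cong[OF refl], rule sum.swap)
  also have "\<dots> = (\<Sum>j<n. \<Sum>p<n. \<Sum>q<n. l j * ((P $$ (p, j) * x p) * (P $$ (q, j) * x q)))"
    by (rule sum.swap)
  also have "\<dots> = (\<Sum>j<n. l j * (\<Sum>p<n. \<Sum>q<n. (P $$ (p, j) * x p) * (P $$ (q, j) * x q)))"
    by (simp add: sum_distrib_left)
  also have "\<dots> = (\<Sum>j<n. l j * (\<Sum>p<n. P $$ (p, j) * x p)\<^sup>2)"
    by (simp add: power2_eq_square sum_product)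
  finally show ?thesis .
qed

lemma spectral_decomp_rayleigh:
  assumes dec: "spectral_decomp n A P l" and i: "i < n"
  shows "l i = (\<Sum>p<n. \<Sum>q<n. P $$ (p, i) * A $$ (p, q) * P $$ (q, i))"
proof -
  have P: "P \<in> carrier_mat n n" "P\<^sup>T * P = 1\<^sub>m n"
    using dec unfolding spectral_decomp_def by auto
  have "(\<Sum>p<n. \<Sum>q<n. P $$ (p, i) * A $$ (p, q) * P $$ (q, i))
      = (\<Sum>j<n. if j = i then l j else 0)"
    unfolding spectral_decomp_quadratic_form[OF dec]
    using orthogonal_mat_cols[OF P _ i] by (intro sum.cong refl) simp
  also have "\<dots> = l i"
    using i by simp
  finally show ?thesis ..
qed

section \<open>Weighted sums\<close>

lemma sum_weighted_le_threshold:
  fixes c w :: "'a \<Rightarrow> real"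
  assumes "finite I" and w: "\<And>p. p \<in> I \<Longrightarrow> 0 \<le> w p \<and> w p \<le> 1"
    and "sum w I \<le> k" and "0 \<le> t"
  shows "(\<Sum>p\<in>I. c p * w p) \<le> t * k + (\<Sum>p\<in>I. max (c p - t) 0)"
proof -
  have "c p * w p \<le> t * w p + max (c p - t) 0" if "p \<in> I" for p
  proof -
    have "(c p - t) * w p \<le> max (c p - t) 0 * w p"
      using w[OF that] by (intro mult_right_mono) auto
    also have "\<dots> \<le> max (c p - t) 0"
      using w[OF that] by (simp add: mult_left_le)
    finally show ?thesis by (simp add: algebra_simps)
  qed
  then have "(\<Sum>p\<in>I. c p * w p) \<le> t * sum w I + (\<Sum>p\<in>I. max (c p - t) 0)"
    by (simp add: sum_distrib_left flip: sum.distrib) (rule sum_mono)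
  also have "\<dots> \<le> t * k + (\<Sum>p\<in>I. max (c p - t) 0)"
    using assms by (simp add: mult_left_mono)
  finally show ?thesis .
qed

lemma sum_excess_antimono:
  fixes c :: "nat \<Rightarrow> real"
  assumes c: "antimono_on {..<n} c" and r: "r < n"
  shows "(\<Sum>j<n. max (c j - c r) 0) = (\<Sum>j<r. c j) - real r * c r"
proof -
  have "{..<n} = {..<r} \<union> {r..<n}"
    using r by auto
  then have "(\<Sum>j<n. max (c j - c r) 0)
      = (\<Sum>j<r. max (c j - c r) 0) + (\<Sum>j\<in>{r..<n}. max (c j - c r) 0)"
    by (metis finite_atLeastLessThan finite_lessThan ivl_disj_int_one(2) sum.union_disjoint)
  also have "(\<Sum>j\<in>{r..<n}. max (c j - c r) 0) = 0"
    using c r by (intro sum.neutral) (auto simp: monotone_on_def)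
  also have "(\<Sum>j<r. max (c j - c r) 0) = (\<Sum>j<r. c j - c r)"
    using c r by (intro sum.cong) (auto simp: monotone_on_def)
  finally show ?thesis
    by (simp add: sum_subtractf)
qed

lemma weighted_sum_le_sum_top:
  fixes c w :: "nat \<Rightarrow> real"
  assumes c: "antimono_on {..<n} c" "\<And>j. j < n \<Longrightarrow> 0 \<le> c j"
    and w: "\<And>j. j < n \<Longrightarrow> 0 \<le> w j \<and> w j \<le> 1" and sw: "(\<Sum>j<n. w j) \<le> real K"
    and K: "K \<le> n"
  shows "(\<Sum>j<n. c j * w j) \<le> (\<Sum>j<K. c j)"
proof (cases K)
  case 0
  with sw w have "\<forall>j\<in>{..<n}. w j = 0"
    by (subst sum_nonneg_eq_0_iff[symmetric]) (auto intro: order_antisym sum_nonneg)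
  then show ?thesis
    using 0 by simp
next
  case (Suc r)
  have "(\<Sum>j<n. c j * w j) \<le> c r * real K + (\<Sum>j<n. max (c j - c r) 0)"
    using sw w c(2)[of r] K Suc by (intro sum_weighted_le_threshold) auto
  also have "\<dots> = (\<Sum>j<K. c j)"
    using c(1) K Suc by (simp add: sum_excess_antimono algebra_simps)
  finally show ?thesis .
qed

lemma weighted_sum_le_top_sum_plus_abs_bound:
  fixes l w D :: "nat \<Rightarrow> real"
  assumes l: "antimono_on {..<n} l" and w: "\<And>j. j < n \<Longrightarrow> 0 \<le> w j \<and> w j \<le> 1"
    and sw: "(\<Sum>j<n. w j) \<le> real k" and D: "\<And>j. j < n \<Longrightarrow> \<bar>l j\<bar> \<le> D j"
  shows "(\<Sum>j<n. l j * w j) \<le> (if k < n then \<Sum>j<k. l j else 0) + (\<Sum>j<min k n. D j)"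
proof -
  define K where "K = min k n"
  have "(\<Sum>j<n. l j * w j) \<le> (\<Sum>j<n. max (l j) 0 * w j)"
    using w by (intro sum_mono mult_right_mono) auto
  also have "\<dots> \<le> (\<Sum>j<K. max (l j) 0)"
  proof (rule weighted_sum_le_sum_top)
    show "antimono_on {..<n} (\<lambda>j. max (l j) 0)"
    proof (rule monotone_onI)
      fix i j assume "i \<in> {..<n}" "j \<in> {..<n}" "i \<le> j"
      then have "l j \<le> l i"
        using l by (simp add: monotone_on_def)
      then show "max (l j) 0 \<le> max (l i) 0"
        by (rule max.mono) simp
    qed
    have "(\<Sum>j<n. w j) \<le> real n"
      using w sum_mono[of "{..<n}" w "\<lambda>_. 1"] by simp
    then show "(\<Sum>j<n. w j) \<le> real K"
      using sw by (simp add: K_def)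
  qed (use w in \<open>auto simp: K_def\<close>)
  also have "\<dots> \<le> (\<Sum>j<K. (if k < n then l j else 0) + D j)"
  proof (rule sum_mono)
    fix j assume "j \<in> {..<K}"
    then have "\<bar>l j\<bar> \<le> D j"
      using D by (simp add: K_def)
    then show "max (l j) 0 \<le> (if k < n then l j else 0) + D j"
      by auto
  qed
  also have "\<dots> = (if k < n then \<Sum>j<k. l j else 0) + (\<Sum>j<min k n. D j)"
    by (simp add: sum.distrib K_def)
  finally show ?thesis .
qed

lemma orthogonal_mat_partial_trace_le:
  fixes P :: "real mat" and c :: "nat \<Rightarrow> real"
  assumes P: "P \<in> carrier_mat n n" "P\<^sup>T * P = 1\<^sub>m n" and k: "k \<le> n" and t: "0 \<le> t"
  shows "(\<Sum>i<k. \<Sum>p<n. c p * (P $$ (p, i))\<^sup>2) \<le> t * k + (\<Sum>p<n. max (c p - t) 0)"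
proof -
  define w where "w p = (\<Sum>i<k. (P $$ (p, i))\<^sup>2)" for p
  have "w p \<le> 1" if "p < n" for p
  proof -
    have "w p \<le> (\<Sum>i<n. (P $$ (p, i))\<^sup>2)"
      unfolding w_def using k by (intro sum_mono2) auto
    also have "\<dots> = 1"
      using orthogonal_mat_rows[OF P that that] by (simp add: power2_eq_square)
    finally show ?thesis .
  qed
  moreover have "(\<Sum>p<n. w p) = k"
  proof -
    have "(\<Sum>p<n. w p) = (\<Sum>i<k. \<Sum>p<n. P $$ (p, i) * P $$ (p, i))"
      unfolding w_def by (subst sum.swap) (simp add: power2_eq_square)
    also have "\<dots> = (\<Sum>i<k. 1)"
      using orthogonal_mat_cols[OF P] k by (intro sum.cong) auto
    finally show ?thesis by simp
  qed
  ultimately have "(\<Sum>p<n. c p * w p) \<le> t * k + (\<Sum>p<n. max (c p - t) 0)"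
    using t by (intro sum_weighted_le_threshold) (auto simp: w_def sum_nonneg)
  moreover have "(\<Sum>i<k. \<Sum>p<n. c p * (P $$ (p, i))\<^sup>2) = (\<Sum>p<n. c p * w p)"
    unfolding w_def by (subst sum.swap) (simp add: sum_distrib_left)
  ultimately show ?thesis by simp
qed

section \<open>Graphs and double graphs\<close>

lemma sum_lessThan_double:
  fixes n :: nat
  shows "(\<Sum>p<2 * n. f p) = (\<Sum>a<n. f a + f (a + n) :: 'a :: comm_monoid_add)"
proof -
  have "(\<Sum>p<2 * n. f p) = (\<Sum>p\<in>{..<n}. f p) + (\<Sum>p\<in>{n..<n + n}. f p)"
    by (simp add: mult_2 lessThan_atLeast0 sum.atLeastLessThan_concat)
  also have "(\<Sum>p\<in>{n..<n + n}. f p) = (\<Sum>a<n. f (a + n))"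
    using sum.shift_bounds_nat_ivl[of f 0 n n] by (simp add: lessThan_atLeast0)
  finally show ?thesis
    by (simp add: sum.distrib)
qed

lemma degree_eq_sum: "real (degree n E a) = (\<Sum>b<n. if E a b then 1 else 0)"
proof -
  have "degree n E a = (\<Sum>b\<in>{b \<in> {..<n}. E a b}. 1)"
    by (simp add: degree_def lessThan_atLeast0)
  also have "\<dots> = (\<Sum>b<n. if E a b then 1 else 0)"
    by (rule sum.inter_filter) simp
  finally show ?thesis
    by (simp add: if_distrib[of real] cong: if_cong)
qed

lemma adj_mat_symmetric:
  assumes "simple_graph n E"
  shows "(adj_mat n E)\<^sup>T = adj_mat n E"
  using assms by (intro eq_matI) (auto simp: adj_mat_def simple_graph_def)

lemma adjacency_quadratic_form_abs_le:
  assumes G: "simple_graph n E"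
  shows "\<bar>\<Sum>a<n. \<Sum>b<n. x a * adj_mat n E $$ (a, b) * x b\<bar>
    \<le> (\<Sum>a<n. real (degree n E a) * (x a)\<^sup>2)"
proof -
  define e where "e a b = (if E a b then 1 else 0 :: real)" for a b
  define Q where "Q = (\<Sum>a<n. \<Sum>b<n. x a * e a b * x b)"
  define Dx where "Dx = (\<Sum>a<n. real (degree n E a) * (x a)\<^sup>2)"
  have e_sym: "e a b = e b a" if "a < n" "b < n" for a b
    using G that by (simp add: e_def simple_graph_def)
  have left: "(\<Sum>a<n. \<Sum>b<n. e a b * (x a)\<^sup>2) = Dx"
    by (simp add: Dx_def degree_eq_sum e_def sum_distrib_right)
  have right: "(\<Sum>a<n. \<Sum>b<n. e a b * (x b)\<^sup>2) = Dx"
    unfolding left[symmetric] by (subst sum.swap) (auto intro!: sum.cong simp: e_sym)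
  have "0 \<le> 2 * Dx + 2 * s * Q" if "s\<^sup>2 = 1" for s
  proof -
    have "0 \<le> (\<Sum>a<n. \<Sum>b<n. e a b * (x a + s * x b)\<^sup>2)"
      by (intro sum_nonneg) (simp add: e_def)
    also have "\<dots> = (\<Sum>a<n. \<Sum>b<n. e a b * (x a)\<^sup>2)
        + s\<^sup>2 * (\<Sum>a<n. \<Sum>b<n. e a b * (x b)\<^sup>2) + 2 * s * Q"
      by (simp add: Q_def power2_sum sum.distrib sum_distrib_left algebra_simps)
    finally show ?thesis
      using that by (simp add: left right)
  qed
  from this[of 1] this[of "-1"] have "\<bar>Q\<bar> \<le> Dx"
    by simp
  moreover have "(\<Sum>a<n. \<Sum>b<n. x a * adj_mat n E $$ (a, b) * x b) = Q"
    by (simp add: Q_def e_def adj_mat_def)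
  ultimately show ?thesis
    by (simp add: Dx_def)
qed

lemma degree_double_edges:
  "real (degree (2 * n) (double_edges n E) p) = 2 * real (degree n E (p mod n))"
proof -
  have "(\<Sum>u<2 * n. if E (p mod n) (u mod n) then 1 else 0 :: real)
      = (\<Sum>b<n. 2 * (if E (p mod n) b then 1 else 0))"
    unfolding sum_lessThan_double by (intro sum.cong) auto
  then show ?thesis
    by (simp add: degree_eq_sum double_edges_def sum_distrib_left)
qed

lemma A_alpha_double_entry:
  assumes "p < 2 * n" "q < 2 * n"
  shows "A_alpha \<alpha> (2 * n) (double_edges n E) $$ (p, q)
    = \<alpha> * (if p = q then 2 * real (degree n E (p mod n)) else 0)
      + (1 - \<alpha>) * adj_mat n E $$ (p mod n, q mod n)"
  using assms by (simp add: A_alpha_def deg_mat_def adj_mat_def double_edges_def degree_double_edges)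

lemma A_alpha_double_symmetric:
  assumes "simple_graph n E"
  shows "(A_alpha \<alpha> (2 * n) (double_edges n E))\<^sup>T = A_alpha \<alpha> (2 * n) (double_edges n E)"
  using assms by (intro eq_matI) (auto simp: A_alpha_def deg_mat_def adj_mat_def double_edges_def simple_graph_def)

lemma A_alpha_double_quadratic_form:
  "(\<Sum>p<2 * n. \<Sum>q<2 * n. x p * A_alpha \<alpha> (2 * n) (double_edges n E) $$ (p, q) * x q)
    = \<alpha> * (\<Sum>p<2 * n. 2 * real (degree n E (p mod n)) * (x p)\<^sup>2)
      + (1 - \<alpha>) * (\<Sum>a<n. \<Sum>b<n. (x a + x (a + n)) * adj_mat n E $$ (a, b) * (x b + x (b + n)))"
proof -
  let ?A = "adj_mat n E"
  have inner: "(\<Sum>q<2 * n. x p * A_alpha \<alpha> (2 * n) (double_edges n E) $$ (p, q) * x q)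
      = \<alpha> * (2 * real (degree n E (p mod n)) * (x p)\<^sup>2)
        + (1 - \<alpha>) * (\<Sum>q<2 * n. x p * ?A $$ (p mod n, q mod n) * x q)" if p: "p < 2 * n" for p
  proof -
    have "(\<Sum>q<2 * n. x p * A_alpha \<alpha> (2 * n) (double_edges n E) $$ (p, q) * x q)
        = (\<Sum>q<2 * n. \<alpha> * (if q = p then 2 * real (degree n E (p mod n)) * (x p)\<^sup>2 else 0)
            + (1 - \<alpha>) * (x p * ?A $$ (p mod n, q mod n) * x q))"
      using p by (intro sum.cong refl)
        (simp add: A_alpha_double_entry, simp add: algebra_simps power2_eq_square)
    then show ?thesis
      using p by (simp add: sum.distrib flip: sum_distrib_left)
  qed
  have fold: "(\<Sum>q<2 * n. x p * ?A $$ (p mod n, q mod n) * x q)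
      = (\<Sum>b<n. x p * ?A $$ (p mod n, b) * (x b + x (b + n)))" for p
    unfolding sum_lessThan_double by (intro sum.cong refl) (simp add: algebra_simps)
  have "(\<Sum>p<2 * n. \<Sum>q<2 * n. x p * A_alpha \<alpha> (2 * n) (double_edges n E) $$ (p, q) * x q)
      = \<alpha> * (\<Sum>p<2 * n. 2 * real (degree n E (p mod n)) * (x p)\<^sup>2)
        + (1 - \<alpha>) * (\<Sum>p<2 * n. \<Sum>b<n. x p * ?A $$ (p mod n, b) * (x b + x (b + n)))"
    by (simp add: inner fold sum.distrib sum_distrib_left)
  also have "(\<Sum>p<2 * n. \<Sum>b<n. x p * ?A $$ (p mod n, b) * (x b + x (b + n)))
      = (\<Sum>a<n. \<Sum>b<n. (x a + x (a + n)) * ?A $$ (a, b) * (x b + x (b + n)))"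
    unfolding sum_lessThan_double by (intro sum.cong refl) (simp add: algebra_simps flip: sum.distrib)
  finally show ?thesis .
qed

lemma degseq_antimono: "antimono_on {..<n} (\<lambda>i. real (degseq n E ! i))"
proof (rule monotone_onI)
  fix i j assume ij: "i \<in> {..<n}" "j \<in> {..<n}" "i \<le> j"
  let ?ds = "sort (map (degree n E) [0..<n])"
  have "?ds ! (n - Suc j) \<le> ?ds ! (n - Suc i)"
    using ij by (intro sorted_nth_mono) auto
  then show "real (degseq n E ! j) \<le> real (degseq n E ! i)"
    using ij by (simp add: degseq_def rev_nth)
qed

lemma sum_degree_degseq:
  "(\<Sum>a<n. f (degree n E a)) = (\<Sum>i<n. f (degseq n E ! i) :: 'a :: comm_monoid_add)"
proof -
  have sum_list_upt: "sum_list (map g [0..<m]) = (\<Sum>a<m. g a)" for g :: "nat \<Rightarrow> 'a" and m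
    by (induction m) simp_all
  have "(\<Sum>i<n. f (degseq n E ! i)) = sum_list (map f (degseq n E))"
    by (simp add: sum_list_sum_nth degseq_def lessThan_atLeast0)
  also have "\<dots> = sum_list (map f (map (degree n E) [0..<n]))"
    by (simp only: sum_mset_sum_list[symmetric] mset_map) (simp add: degseq_def)
  also have "\<dots> = (\<Sum>a<n. f (degree n E a))"
    using sum_list_upt by simp
  finally show ?thesis ..
qed

section \<open>Eigenvalue sums of the double graph\<close>

lemma double_degree_weighted_sum_le:
  fixes U :: "real mat"
  assumes U: "U \<in> carrier_mat (2 * n) (2 * n)" "U\<^sup>T * U = 1\<^sub>m (2 * n)"
    and k: "k \<le> 2 * n" and t: "0 \<le> t"
  shows "(\<Sum>i<k. \<Sum>p<2 * n. 2 * real (degree n E (p mod n)) * (U $$ (p, i))\<^sup>2)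
    \<le> 2 * (t * k + 2 * (\<Sum>a<n. max (real (degree n E a) - t) 0))"
proof -
  have "(\<Sum>i<k. \<Sum>p<2 * n. 2 * real (degree n E (p mod n)) * (U $$ (p, i))\<^sup>2)
      \<le> 2 * t * k + (\<Sum>p<2 * n. max (2 * real (degree n E (p mod n)) - 2 * t) 0)"
    using t by (intro orthogonal_mat_partial_trace_le[OF U k]) simp
  also have "(\<Sum>p<2 * n. max (2 * real (degree n E (p mod n)) - 2 * t) 0)
      = (\<Sum>a<n. 4 * max (real (degree n E a) - t) 0)"
    unfolding sum_lessThan_double by (intro sum.cong refl) (auto simp: max_def)
  finally show ?thesis
    by (simp add: algebra_simps sum_distrib_left)
qed

text \<open>The inner sum in \<open>W j\<close> is the inner product of column \<open>i\<close> of \<open>U\<close> with column \<open>j\<close> of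
  \<open>V\<close> stacked on itself, a vector of squared norm 2; hence Bessel's inequality gives \<open>W j \<le> 2\<close>.\<close>

lemma folded_projection_weights:
  fixes U V :: "real mat"
  assumes U: "U \<in> carrier_mat (2 * n) (2 * n)" "U\<^sup>T * U = 1\<^sub>m (2 * n)"
    and V: "V \<in> carrier_mat n n" "V\<^sup>T * V = 1\<^sub>m n" and k: "k \<le> 2 * n"
  defines "W j \<equiv> \<Sum>i<k. (\<Sum>a<n. V $$ (a, j) * (U $$ (a, i) + U $$ (a + n, i)))\<^sup>2"
  shows "j < n \<Longrightarrow> W j \<le> 2" and "(\<Sum>j<n. W j) \<le> 2 * real k"
proof -
  assume j: "j < n"
  have fold: "(\<Sum>a<n. V $$ (a, j) * (U $$ (a, i) + U $$ (a + n, i)))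
      = (\<Sum>p<2 * n. U $$ (p, i) * V $$ (p mod n, j))" for i
    unfolding sum_lessThan_double by (intro sum.cong refl) (simp add: algebra_simps)
  have "W j \<le> (\<Sum>i<2 * n. (\<Sum>p<2 * n. U $$ (p, i) * V $$ (p mod n, j))\<^sup>2)"
    unfolding W_def fold using k by (intro sum_mono2) auto
  also have "\<dots> = (\<Sum>p<2 * n. (V $$ (p mod n, j))\<^sup>2)"
    by (rule orthogonal_mat_parseval[OF U])
  also have "\<dots> = 2 * (\<Sum>a<n. V $$ (a, j) * V $$ (a, j))"
    by (simp add: sum_lessThan_double power2_eq_square sum_distrib_left)
  also have "\<dots> = 2"
    using orthogonal_mat_cols[OF V j j] by simp
  finally show "W j \<le> 2" .
next
  have "(\<Sum>j<n. W j) = (\<Sum>i<k. \<Sum>j<n. (\<Sum>a<n. V $$ (a, j) * (U $$ (a, i) + U $$ (a + n, i)))\<^sup>2)"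
    unfolding W_def by (rule sum.swap)
  also have "\<dots> = (\<Sum>i<k. \<Sum>a<n. (U $$ (a, i) + U $$ (a + n, i))\<^sup>2)"
    by (simp add: orthogonal_mat_parseval[OF V])
  also have "\<dots> \<le> (\<Sum>i<k. 2 * (\<Sum>a<n. (U $$ (a, i))\<^sup>2 + (U $$ (a + n, i))\<^sup>2))"
  proof (intro sum_mono, unfold sum_distrib_left, intro sum_mono)
    fix i a
    show "(U $$ (a, i) + U $$ (a + n, i))\<^sup>2 \<le> 2 * ((U $$ (a, i))\<^sup>2 + (U $$ (a + n, i))\<^sup>2)"
      using sum_squares_ge_zero[of "U $$ (a, i) - U $$ (a + n, i)" 0]
      by (simp add: power2_eq_square algebra_simps)
  qed
  also have "\<dots> = (\<Sum>i<k. 2 * (\<Sum>p<2 * n. U $$ (p, i) * U $$ (p, i)))"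
    by (simp add: sum_lessThan_double power2_eq_square)
  also have "\<dots> = (\<Sum>i<k. 2)"
    using orthogonal_mat_cols[OF U] k by (intro sum.cong) auto
  finally show "(\<Sum>j<n. W j) \<le> 2 * real k"
    by simp
qed

lemma adjacency_folded_sum_le:
  fixes U :: "real mat"
  assumes G: "simple_graph n E" and U: "U \<in> carrier_mat (2 * n) (2 * n)" "U\<^sup>T * U = 1\<^sub>m (2 * n)"
    and k: "k \<le> 2 * n" and t: "0 \<le> t"
  defines "y i a \<equiv> U $$ (a, i) + U $$ (a + n, i)"
  shows "(\<Sum>i<k. \<Sum>a<n. \<Sum>b<n. y i a * adj_mat n E $$ (a, b) * y i b)
    \<le> 2 * ((if k < n then S k (adj_mat n E) else 0)
           + (t * k + (\<Sum>a<n. max (real (degree n E a) - t) 0)))"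
proof -
  let ?A = "adj_mat n E"
  have A: "?A \<in> carrier_mat n n"
    by (simp add: adj_mat_def)
  obtain V l where dec: "spectral_decomp n ?A V l"
    using spectral_decomp_exists[OF A adj_mat_symmetric[OF G]] by blast
  then have V: "V \<in> carrier_mat n n" "V\<^sup>T * V = 1\<^sub>m n" and l: "antimono_on {..<n} l"
    by (auto simp: spectral_decomp_def)
  define W where "W j = (\<Sum>i<k. (\<Sum>a<n. V $$ (a, j) * y i a)\<^sup>2)" for j
  define D where "D j = (\<Sum>a<n. real (degree n E a) * (V $$ (a, j))\<^sup>2)" for j
  have "(\<Sum>i<k. \<Sum>a<n. \<Sum>b<n. y i a * ?A $$ (a, b) * y i b) = (\<Sum>j<n. l j * W j)"
    unfolding spectral_decomp_quadratic_form[OF dec] W_def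
    by (subst sum.swap) (simp add: sum_distrib_left)
  also have "\<dots> = 2 * (\<Sum>j<n. l j * (W j / 2))"
    by (simp add: sum_distrib_left)
  also have "(\<Sum>j<n. l j * (W j / 2)) \<le> (if k < n then \<Sum>j<k. l j else 0) + (\<Sum>j<min k n. D j)"
  proof (rule weighted_sum_le_top_sum_plus_abs_bound[OF l])
    show "0 \<le> W j / 2 \<and> W j / 2 \<le> 1" if "j < n" for j
      using folded_projection_weights(1)[OF U V k that] unfolding W_def y_def
      by (auto intro: sum_nonneg)
    show "(\<Sum>j<n. W j / 2) \<le> real k"
      using folded_projection_weights(2)[OF U V k] unfolding W_def y_def
      by (simp add: sum_divide_distrib[symmetric])
    show "\<bar>l j\<bar> \<le> D j" if "j < n" for j
      using adjacency_quadratic_form_abs_le[OF G, of "\<lambda>a. V $$ (a, j)"]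
      unfolding spectral_decomp_rayleigh[OF dec that] D_def by (simp add: ac_simps)
  qed
  also have "(if k < n then \<Sum>j<k. l j else 0) = (if k < n then S k ?A else 0)"
    using S_spectral_decomp[OF dec] by simp
  also have "(\<Sum>j<min k n. D j) \<le> t * min k n + (\<Sum>a<n. max (real (degree n E a) - t) 0)"
    unfolding D_def by (rule orthogonal_mat_partial_trace_le[OF V _ t]) simp
  also have "t * min k n \<le> t * k"
    using t by (intro mult_left_mono) auto
  finally show ?thesis
    by (simp add: algebra_simps)
qed

lemma S_A_alpha_double_le:
  assumes G: "simple_graph n E" and \<alpha>: "0 \<le> \<alpha>" "\<alpha> \<le> 1" and k: "k \<le> 2 * n" and t: "0 \<le> t"
  defines "B \<equiv> t * k + 2 * (\<Sum>a<n. max (real (degree n E a) - t) 0)"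
  shows "S k (A_alpha \<alpha> (2 * n) (double_edges n E))
    \<le> 2 * B + 2 * (1 - \<alpha>) * (if k < n then S k (adj_mat n E) else 0)"
proof -
  let ?M = "A_alpha \<alpha> (2 * n) (double_edges n E)"
  let ?X = "if k < n then S k (adj_mat n E) else 0"
  have M: "?M \<in> carrier_mat (2 * n) (2 * n)"
    by (simp add: A_alpha_def deg_mat_def adj_mat_def)
  obtain U \<mu> where dec: "spectral_decomp (2 * n) ?M U \<mu>"
    using spectral_decomp_exists[OF M A_alpha_double_symmetric[OF G]] by blast
  then have U: "U \<in> carrier_mat (2 * n) (2 * n)" "U\<^sup>T * U = 1\<^sub>m (2 * n)"
    by (auto simp: spectral_decomp_def)
  define deg_part where
    "deg_part = (\<Sum>i<k. \<Sum>p<2 * n. 2 * real (degree n E (p mod n)) * (U $$ (p, i))\<^sup>2)"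
  define adj_part where
    "adj_part = (\<Sum>i<k. \<Sum>a<n. \<Sum>b<n. (U $$ (a, i) + U $$ (a + n, i)) * adj_mat n E $$ (a, b)
        * (U $$ (b, i) + U $$ (b + n, i)))"
  have "S k ?M = (\<Sum>i<k. \<mu> i)"
    by (rule S_spectral_decomp[OF dec k])
  also have "\<dots> = \<alpha> * deg_part + (1 - \<alpha>) * adj_part"
    using k unfolding deg_part_def adj_part_def
    by (simp add: spectral_decomp_rayleigh[OF dec] A_alpha_double_quadratic_form sum.distrib
        sum_distrib_left)
  also have "\<dots> \<le> \<alpha> * (2 * B) + (1 - \<alpha>) * (2 * (?X + B))"
  proof (intro add_mono mult_left_mono)
    show "deg_part \<le> 2 * B"
      unfolding deg_part_def B_def by (rule double_degree_weighted_sum_le[OF U k t])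
    have "adj_part \<le> 2 * (?X + (t * k + (\<Sum>a<n. max (real (degree n E a) - t) 0)))"
      unfolding adj_part_def by (rule adjacency_folded_sum_le[OF G U k t])
    also have "\<dots> \<le> 2 * (?X + B)"
      by (simp add: B_def sum_nonneg)
    finally show "adj_part \<le> 2 * (?X + B)" .
  qed (use \<alpha> in auto)
  also have "\<dots> = 2 * B + 2 * (1 - \<alpha>) * ?X"
    by (simp add: algebra_simps)
  finally show ?thesis .
qed

lemma degree_threshold_bound_eq:
  fixes E :: "nat \<Rightarrow> nat \<Rightarrow> bool"
  assumes k: "1 \<le> k" "k \<le> 2 * n"
  defines "t \<equiv> dg n E ((k + 1) div 2)"
  shows "2 * (t * k + 2 * (\<Sum>a<n. max (real (degree n E a) - t) 0))
    = (if even k then 4 * (\<Sum>i=1..k div 2. dg n E i)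
       else 4 * (\<Sum>i=1..(k - 1) div 2. dg n E i) + 2 * dg n E ((k + 1) div 2))"
proof -
  define c where "c i = real (degseq n E ! i)" for i
  define r where "r = (k - 1) div 2"
  have r: "r < n" and k_r: "(k + 1) div 2 = Suc r"
    using k unfolding r_def by presburger+
  then have t_r: "t = c r"
    by (simp add: t_def c_def dg_def)
  have dg_c: "(\<Sum>i=1..m. dg n E i) = (\<Sum>i<m. c i)" for m
    by (simp add: dg_def c_def sum.atLeast1_atMost_eq)
  have "(\<Sum>a<n. max (real (degree n E a) - t) 0) = (\<Sum>i<n. max (c i - c r) 0)"
    unfolding t_r c_def by (rule sum_degree_degseq)
  also have "\<dots> = (\<Sum>i<r. c i) - real r * c r"
    using degseq_antimono r unfolding c_def by (rule sum_excess_antimono)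
  finally have excess: "(\<Sum>a<n. max (real (degree n E a) - t) 0) = (\<Sum>i<r. c i) - real r * c r" .
  show ?thesis
  proof (cases "even k")
    case True
    then have "k = 2 * r + 2" "k div 2 = Suc r"
      using k by (auto simp: r_def elim!: evenE)
    then show ?thesis
      using True unfolding excess dg_c by (simp add: t_r algebra_simps)
  next
    case False
    then have "k = 2 * r + 1" "(k - 1) div 2 = r" "(k + 1) div 2 = Suc r"
      using k by (auto simp: r_def elim!: oddE)
    moreover have "dg n E (Suc r) = c r"
      by (simp add: dg_def c_def)
    ultimately show ?thesis
      using False unfolding excess dg_c by (simp add: t_r algebra_simps)
  qed
qed

theorem theorem6p4:
  fixes n k :: nat and E :: "nat \<Rightarrow> nat \<Rightarrow> bool" and \<alpha> :: real
  assumes "simple_graph n E"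
    and "0 \<le> \<alpha>" and "\<alpha> \<le> 1"
  shows "(1 < k \<and> k < n \<and> even k \<longrightarrow>
           S k (A_alpha \<alpha> (2 * n) (double_edges n E))
             \<le> 4 * (\<Sum>i=1..k div 2. dg n E i) + 2 * (1 - \<alpha>) * S k (adj_mat n E))
       \<and> (1 \<le> k \<and> k < n \<and> odd k \<longrightarrow>
           S k (A_alpha \<alpha> (2 * n) (double_edges n E))
             \<le> 4 * (\<Sum>i=1..(k - 1) div 2. dg n E i) + 2 * dg n E ((k + 1) div 2)
                + 2 * (1 - \<alpha>) * S k (adj_mat n E))
       \<and> (n \<le> k \<and> k \<le> 2 * n \<and> even k \<longrightarrow>
           S k (A_alpha \<alpha> (2 * n) (double_edges n E))
             \<le> 4 * (\<Sum>i=1..k div 2. dg n E i))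
       \<and> (n \<le> k \<and> k \<le> 2 * n \<and> odd k \<longrightarrow>
           S k (A_alpha \<alpha> (2 * n) (double_edges n E))
             \<le> 4 * (\<Sum>i=1..(k - 1) div 2. dg n E i) + 2 * dg n E ((k + 1) div 2))"
proof -
  let ?M = "A_alpha \<alpha> (2 * n) (double_edges n E)"
  have bound: "S k ?M \<le> (if even k then 4 * (\<Sum>i=1..k div 2. dg n E i)
        else 4 * (\<Sum>i=1..(k - 1) div 2. dg n E i) + 2 * dg n E ((k + 1) div 2))
      + 2 * (1 - \<alpha>) * (if k < n then S k (adj_mat n E) else 0)"
    if "1 \<le> k" "k \<le> 2 * n"
    using S_A_alpha_double_le[OF assms that(2), of "dg n E ((k + 1) div 2)"]
      degree_threshold_bound_eq[OF that, of E]
    by (simp add: dg_def)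
  moreover have "S 0 ?M = 0"
    by (simp add: S_def)
  ultimately show ?thesis
    by (cases k) auto
qed

end
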